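(* Let $\Gamma$ be a connected signed graph on $N$ vertices containing edges of both signs, with signed Laplacian $\mathcal{L}$. For each $i$ let $D_i=\{z\in\mathbb{C}:|z-\mathcal{L}_{ii}|\le\sum_{j\ne i}|\mathcal{L}_{ij}|\}$ be the $i$-th Gershgorin disc, and let $n$ be the number of indices $i$ for which $0$ lies in the interior of $D_i$. Then $n\ge\tau(\Gamma)+1$.
   Context: A signed graph $\Gamma$ is a finite simple undirected graph with vertex set $\{1,\dots,N\}$ in which every edge $\{i,j\}$ carries a nonzero real weight $\gamma_{ij}$, which may be of either sign ($\gamma_{ij}=0$ for non-edges). The signed Laplacian has $\mathcal{L}_{ij}=\gamma_{ij}$ for $i\ne j$ and $\mathcal{L}_{ii}=-\sum_{k\ne i}\gamma_{ik}$. $\Gamma_+$ (resp. $\Gamma_-$) is the spanning subgraph on all vertices containing exactly the positively (resp. negatively) weighted edges; $c(H)$ is the number of connected components of $H$; the flexibility is $\tau(\Gamma)=N-c(\Gamma_-)-c(\Gamma_+)+1$. *)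

theory Defs
  imports "HOL-Analysis.Analysis"
begin

definition signed_graph :: "nat \<Rightarrow> (nat \<Rightarrow> nat \<Rightarrow> real) \<Rightarrow> bool" where
  "signed_graph N \<gamma> \<longleftrightarrow>
     (\<forall>i j. \<gamma> i j = \<gamma> j i) \<and> (\<forall>i. \<gamma> i i = 0) \<and>
     (\<forall>i j. \<gamma> i j \<noteq> 0 \<longrightarrow> i \<in> {1..N} \<and> j \<in> {1..N})"

definition signed_laplacian :: "nat \<Rightarrow> (nat \<Rightarrow> nat \<Rightarrow> real) \<Rightarrow> nat \<Rightarrow> nat \<Rightarrow> real" where
  "signed_laplacian N \<gamma> i j =
     (if i = j then - (\<Sum>k\<in>{1..N} - {i}. \<gamma> i k) else \<gamma> i j)"

definition num_components :: "nat \<Rightarrow> (nat \<Rightarrow> nat \<Rightarrow> bool) \<Rightarrow> nat" where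
  "num_components N E =
     card ({1..N} // ({(i, j). i \<in> {1..N} \<and> j \<in> {1..N} \<and> E i j}\<^sup>*))"

definition pos_edge :: "(nat \<Rightarrow> nat \<Rightarrow> real) \<Rightarrow> nat \<Rightarrow> nat \<Rightarrow> bool" where
  "pos_edge \<gamma> i j \<longleftrightarrow> \<gamma> i j > 0"

definition neg_edge :: "(nat \<Rightarrow> nat \<Rightarrow> real) \<Rightarrow> nat \<Rightarrow> nat \<Rightarrow> bool" where
  "neg_edge \<gamma> i j \<longleftrightarrow> \<gamma> i j < 0"

definition any_edge :: "(nat \<Rightarrow> nat \<Rightarrow> real) \<Rightarrow> nat \<Rightarrow> nat \<Rightarrow> bool" where
  "any_edge \<gamma> i j \<longleftrightarrow> \<gamma> i j \<noteq> 0"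

text \<open>Flexibility tau = N - c(Gamma_-) - c(Gamma_+) + 1 (as an integer).\<close>
definition flexibility :: "nat \<Rightarrow> (nat \<Rightarrow> nat \<Rightarrow> real) \<Rightarrow> int" where
  "flexibility N \<gamma> = int N - int (num_components N (neg_edge \<gamma>))
                       - int (num_components N (pos_edge \<gamma>)) + 1"

definition gershgorin_disc :: "nat \<Rightarrow> (nat \<Rightarrow> nat \<Rightarrow> real) \<Rightarrow> nat \<Rightarrow> complex set" where
  "gershgorin_disc N L i =
     cball (complex_of_real (L i i)) (\<Sum>j\<in>{1..N} - {i}. \<bar>L i j\<bar>)"

end

theory Submission
  imports Defs
begin

text \<open>A vertex carrying edges of both signs has Laplacian row sum strictly smaller in absolute
  value than the absolute row sum, i.e. 0 lies in the interior of its Gershgorin disc. Every other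
  vertex is isolated in \<open>\<Gamma>\<^sub>-\<close> or in \<open>\<Gamma>\<^sub>+\<close>. Isolated vertices are singleton
  components, and since both \<open>\<Gamma>\<^sub>-\<close> and \<open>\<Gamma>\<^sub>+\<close> have an edge, each has at least one further
  component; hence \<open>N \<le> n + (c(\<Gamma>\<^sub>-) - 1) + (c(\<Gamma>\<^sub>+) - 1)\<close>.\<close>

lemma abs_sum_less_sum_abs:
  fixes f :: "'a \<Rightarrow> real"
  assumes "finite T" "j \<in> T" "k \<in> T" "f j < 0" "f k > 0"
  shows "\<bar>sum f T\<bar> < (\<Sum>x\<in>T. \<bar>f x\<bar>)"
proof -
  have "sum f T < (\<Sum>x\<in>T. \<bar>f x\<bar>)"
    by (rule sum_strict_mono_ex1) (use assms in \<open>auto intro!: bexI[of _ j]\<close>)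
  moreover have "- sum f T < (\<Sum>x\<in>T. \<bar>f x\<bar>)"
    unfolding sum_negf[symmetric]
    by (rule sum_strict_mono_ex1) (use assms in \<open>auto intro!: bexI[of _ k]\<close>)
  ultimately show ?thesis by linarith
qed

lemma zero_in_interior_cball_of_real_iff:
  "0 \<in> interior (cball (complex_of_real c) r) \<longleftrightarrow> \<bar>c\<bar> < r"
  by (simp add: interior_cball dist_norm norm_minus_commute)

lemma card_isolated_less_card_quotient:
  assumes "finite S" "v \<in> S" "(v, w) \<in> R"
  shows "card {x\<in>S. \<forall>y. (x, y) \<notin> R} + 1 \<le> card (S // R\<^sup>*)"
proof -
  define A where "A = {x\<in>S. \<forall>y. (x, y) \<notin> R}"
  define cls where "cls = (\<lambda>x. R\<^sup>* `` {x})"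
  have cls_isolated: "cls x = {x}" if "x \<in> A" for x
  proof -
    have "y = x" if "(x, y) \<in> R\<^sup>*" for y
      using that \<open>x \<in> A\<close> by (cases rule: converse_rtranclE) (auto simp: A_def)
    then show ?thesis by (auto simp: cls_def)
  qed
  have "v \<notin> A" using assms by (auto simp: A_def)
  have "inj_on cls (insert v A)"
  proof (rule inj_onI)
    fix x y assume "x \<in> insert v A" "y \<in> insert v A" "cls x = cls y"
    moreover have "z \<in> cls z" for z by (simp add: cls_def)
    ultimately show "x = y"
      using cls_isolated \<open>v \<notin> A\<close> by (metis insertE singletonD)
  qed
  moreover have "cls ` insert v A \<subseteq> S // R\<^sup>*"
    using assms by (auto simp: cls_def A_def quotient_def)
  moreover have "finite (S // R\<^sup>*)"
    using \<open>finite S\<close> by (simp add: quotient_def)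
  ultimately have "card (insert v A) \<le> card (S // R\<^sup>*)"
    by (metis card_image card_mono)
  moreover have "finite A" using \<open>finite S\<close> by (simp add: A_def)
  ultimately show ?thesis using \<open>v \<notin> A\<close> by (simp add: A_def)
qed

definition isolated_vertices :: "nat \<Rightarrow> (nat \<Rightarrow> nat \<Rightarrow> bool) \<Rightarrow> nat set" where
  "isolated_vertices N E = {i \<in> {1..N}. \<forall>j\<in>{1..N}. \<not> E i j}"

lemma card_isolated_vertices_less_num_components:
  assumes "i \<in> {1..N}" "j \<in> {1..N}" "E i j"
  shows "card (isolated_vertices N E) + 1 \<le> num_components N E"
proof -
  define R where "R = {(i, j). i \<in> {1..N} \<and> j \<in> {1..N} \<and> E i j}"
  have "isolated_vertices N E = {x\<in>{1..N}. \<forall>y. (x, y) \<notin> R}"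
    by (auto simp: isolated_vertices_def R_def)
  moreover have "(i, j) \<in> R" using assms by (simp add: R_def)
  ultimately show ?thesis
    using card_isolated_less_card_quotient[of "{1..N}" i j R] assms(1)
    by (simp add: num_components_def R_def)
qed

lemma signed_graph_edge_in_vertices:
  assumes "signed_graph N \<gamma>" "\<gamma> i j \<noteq> 0"
  shows "i \<in> {1..N}" "j \<in> {1..N}"
  using assms by (auto simp: signed_graph_def)

lemma zero_in_interior_gershgorin_disc_if_mixed_signs:
  assumes "signed_graph N \<gamma>" "\<gamma> i j < 0" "\<gamma> i k > 0"
  shows "0 \<in> interior (gershgorin_disc N (signed_laplacian N \<gamma>) i)"
proof -
  define T where "T = {1..N} - {i}"
  have "j \<in> T" "k \<in> T"
    using assms signed_graph_edge_in_vertices(2)[OF assms(1), of i j]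
      signed_graph_edge_in_vertices(2)[OF assms(1), of i k]
    by (auto simp: T_def signed_graph_def)
  then have "\<bar>sum (\<gamma> i) T\<bar> < (\<Sum>x\<in>T. \<bar>\<gamma> i x\<bar>)"
    using abs_sum_less_sum_abs[of T j k "\<gamma> i"] assms by (simp add: T_def)
  moreover have "(\<Sum>x\<in>T. \<bar>signed_laplacian N \<gamma> i x\<bar>) = (\<Sum>x\<in>T. \<bar>\<gamma> i x\<bar>)"
    by (rule sum.cong) (auto simp: T_def signed_laplacian_def)
  moreover have "signed_laplacian N \<gamma> i i = - sum (\<gamma> i) T"
    by (simp add: signed_laplacian_def T_def)
  ultimately show ?thesis
    unfolding gershgorin_disc_def T_def[symmetric] zero_in_interior_cball_of_real_iff
    by simp
qed

lemma vertices_subset_gershgorin_or_isolated: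
  assumes "signed_graph N \<gamma>"
  shows "{1..N} \<subseteq> {i \<in> {1..N}. 0 \<in> interior (gershgorin_disc N (signed_laplacian N \<gamma>) i)}
           \<union> isolated_vertices N (neg_edge \<gamma>) \<union> isolated_vertices N (pos_edge \<gamma>)"
  using zero_in_interior_gershgorin_disc_if_mixed_signs[OF assms]
  by (auto simp: isolated_vertices_def neg_edge_def pos_edge_def)

theorem mainTheorem12:
  fixes N :: nat and \<gamma> :: "nat \<Rightarrow> nat \<Rightarrow> real"
  assumes "signed_graph N \<gamma>"
    and "num_components N (any_edge \<gamma>) = 1"
    and "\<exists>i j. \<gamma> i j > 0"
    and "\<exists>i j. \<gamma> i j < 0"
  shows "int (card {i \<in> {1..N}. 0 \<in> interior (gershgorin_disc N (signed_laplacian N \<gamma>) i)})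
           \<ge> flexibility N \<gamma> + 1"
proof -
  define M where "M = {i \<in> {1..N}. 0 \<in> interior (gershgorin_disc N (signed_laplacian N \<gamma>) i)}"
  define In where "In = isolated_vertices N (neg_edge \<gamma>)"
  define Ip where "Ip = isolated_vertices N (pos_edge \<gamma>)"
  obtain a b where "\<gamma> a b < 0" using assms(4) by auto
  then have neg: "card In + 1 \<le> num_components N (neg_edge \<gamma>)"
    using card_isolated_vertices_less_num_components[of a N b "neg_edge \<gamma>"]
      signed_graph_edge_in_vertices[OF assms(1), of a b]
    by (simp add: In_def neg_edge_def)
  obtain c d where "\<gamma> c d > 0" using assms(3) by auto
  then have pos: "card Ip + 1 \<le> num_components N (pos_edge \<gamma>)"
    using card_isolated_vertices_less_num_components[of c N d "pos_edge \<gamma>"]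
      signed_graph_edge_in_vertices[OF assms(1), of c d]
    by (simp add: Ip_def pos_edge_def)
  have "N \<le> card (M \<union> In \<union> Ip)"
    using card_mono[OF _ vertices_subset_gershgorin_or_isolated[OF assms(1)]]
    by (simp add: M_def In_def Ip_def isolated_vertices_def)
  also have "\<dots> \<le> card M + card In + card Ip"
    by (meson add_le_mono card_Un_le le_refl order_trans)
  finally show ?thesis
    using neg pos unfolding flexibility_def M_def[symmetric] by linarith
qed

end
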